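(* Let $V\colon\mathbb{R}^3\to S^2$ define a line fibration of $\mathbb{R}^3$ whose induced plane field $\xi=\ker(V_1\,\mathrm{d}x_1+V_2\,\mathrm{d}x_2+V_3\,\mathrm{d}x_3)$ is a contact structure. Suppose that for every line $\ell$ of the fibration there exists a line $\ell'\neq\ell$ of the fibration parallel to $\ell$. Then $\mathrm{d}_pV$ has rank exactly $1$ at every point $p\in\mathbb{R}^3$. *)

theory Defs
  imports "HOL-Analysis.Analysis"
begin

coinductive smooth_map :: "('a::real_normed_vector \<Rightarrow> 'b::real_normed_vector) \<Rightarrow> bool" where
  "(\<forall>x. f differentiable (at x)) \<Longrightarrow> (\<forall>v. smooth_map (\<lambda>x. frechet_derivative f (at x) v))
     \<Longrightarrow> smooth_map f"

definition pd :: "(real^3 \<Rightarrow> real^3) \<Rightarrow> 3 \<Rightarrow> 3 \<Rightarrow> real^3 \<Rightarrow> real" where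
  "pd V i j p = frechet_derivative V (at p) (axis i 1) $ j"

text \<open>Curl of V; for alpha = V1 dx1 + V2 dx2 + V3 dx3 one has
  alpha /\ d alpha = (V . curl V) dx1 /\ dx2 /\ dx3.\<close>
definition curl :: "(real^3 \<Rightarrow> real^3) \<Rightarrow> real^3 \<Rightarrow> real^3" where
  "curl V p = vector [pd V 2 3 p - pd V 3 2 p, pd V 3 1 p - pd V 1 3 p, pd V 1 2 p - pd V 2 1 p]"

definition contact_field :: "(real^3 \<Rightarrow> real^3) \<Rightarrow> bool" where
  "contact_field V \<longleftrightarrow> (\<forall>p. V p \<bullet> curl V p \<noteq> 0)"

definition fib_line :: "(real^3 \<Rightarrow> real^3) \<Rightarrow> real^3 \<Rightarrow> (real^3) set" where
  "fib_line V p = range (\<lambda>t::real. p + t *\<^sub>R V p)"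

definition line_fibration :: "(real^3 \<Rightarrow> real^3) \<Rightarrow> bool" where
  "line_fibration V \<longleftrightarrow> smooth_map V \<and> (\<forall>p. norm (V p) = 1) \<and>
     (\<forall>p q. q \<in> fib_line V p \<longrightarrow> fib_line V q = fib_line V p)"

end

theory Submission
  imports Defs
begin

(* Since |V| = 1, the image of d_pV is orthogonal to V p, so its rank is at most 2, and the
   contact condition rules out rank 0.  Suppose the rank is 2.  Pick n with n \<bullet> V p = 1 that is
   transversal to the kernel of d_pV, and record each line by its slope u x = V x / (V x \<bullet> n).
   On the plane through p orthogonal to n the slope map then has invertible derivative at p, so
   by Brouwer's fixed point theorem it satisfies u x - u y = lam (x - y), lam > 0, for some x of
   the plane near p, where y is the point in which a parallel line meets the plane (u y = u p).
   The lines through x and y then meet in x - u x / lam, hence coincide, which forces x = y. *)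

lemma smooth_map_differentiable: "smooth_map f \<Longrightarrow> f differentiable (at x)"
  by (erule smooth_map.cases) auto

lemma unit_field_derivative_orthogonal:
  fixes V :: "'a::real_normed_vector \<Rightarrow> 'b::real_inner"
  assumes unit: "\<And>x. norm (V x) = 1" and deriv: "(V has_derivative D) (at p)"
  shows "V p \<bullet> D w = 0"
proof -
  have "((\<lambda>x. V x \<bullet> V x) has_derivative (\<lambda>w. V p \<bullet> D w + D w \<bullet> V p)) (at p)"
    using deriv deriv by (rule has_derivative_inner)
  moreover have "(\<lambda>x. V x \<bullet> V x) = (\<lambda>x. 1)"
    using unit by (simp add: fun_eq_iff dot_square_norm)
  ultimately have "(\<lambda>w. V p \<bullet> D w + D w \<bullet> V p) = (\<lambda>w. 0)"
    using has_derivative_const has_derivative_unique by metis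
  then show ?thesis by (metis inner_commute mult_2 mult_eq_0_iff zero_neq_numeral)
qed

lemma dim_range_add_dim_le:
  fixes D :: "'a::euclidean_space \<Rightarrow> 'b::euclidean_space"
  assumes lin: "linear D" and K: "\<And>w. w \<in> K \<Longrightarrow> D w = 0"
  shows "dim (range D) + dim K \<le> DIM('a)"
proof -
  obtain A where "A \<subseteq> K" and indA: "independent A" and "K \<subseteq> span A" and cardA: "card A = dim K"
    by (rule basis_exists)
  obtain B where AB: "A \<subseteq> B" and "B \<subseteq> UNIV" and indB: "independent B" and spanB: "UNIV \<subseteq> span B"
    by (rule maximal_independent_subset_extend[OF subset_UNIV indA])
  have finB: "finite B" using indB by (rule finiteI_independent)
  have cardB: "card B = DIM('a)"
  proof -
    have "span B = UNIV" using spanB by blast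
    then show ?thesis by (metis dim_eq_card_independent[OF indB] dim_span dim_UNIV)
  qed
  have "range D = D ` span B" using spanB by auto
  also have "\<dots> = span (D ` B)" by (simp add: span_linear_image[OF lin])
  also have "\<dots> \<subseteq> span (D ` (B - A))"
  proof (intro span_minimal subsetI)
    fix z assume "z \<in> D ` B"
    then obtain b where "b \<in> B" "z = D b" by blast
    then show "z \<in> span (D ` (B - A))"
      using \<open>A \<subseteq> K\<close> K by (cases "b \<in> A") (auto simp: subset_iff span_zero intro: span_base)
  qed simp
  finally have "dim (range D) \<le> dim (D ` (B - A))"
    by (metis dim_span dim_subset)
  also have "\<dots> \<le> card (B - A)"
    using finB by (meson dim_le_card' card_image_le finite_Diff finite_imageI order_trans)
  also have "\<dots> = DIM('a) - dim K"
    using AB finB cardA cardB by (simp add: card_Diff_subset finite_subset)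
  moreover have "dim K \<le> DIM('a)"
    using card_mono[OF finB AB] cardA cardB by simp
  ultimately show ?thesis by linarith
qed

lemma exists_transversal_to_kernel:
  fixes D :: "'a::euclidean_space \<Rightarrow> 'b::euclidean_space"
  assumes lin: "linear D" and rank: "dim (range D) + 1 = DIM('a)" and "v \<noteq> 0"
  obtains n where "n \<bullet> v = 1" and "\<And>w. D w = 0 \<Longrightarrow> n \<bullet> w = 0 \<Longrightarrow> w = 0"
proof (cases "\<exists>k. k \<noteq> 0 \<and> D k = 0")
  case False
  show ?thesis
    by (rule that[of "inverse (v \<bullet> v) *\<^sub>R v"]) (use False \<open>v \<noteq> 0\<close> in auto)
next
  case True
  then obtain k where k: "k \<noteq> 0" "D k = 0" by blast
  obtain n where nv: "n \<bullet> v = 1" and nk: "n \<bullet> k \<noteq> 0"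
  proof (cases "v \<bullet> k = 0")
    case True
    show ?thesis
      by (rule that[of "inverse (v \<bullet> v) *\<^sub>R v + inverse (k \<bullet> k) *\<^sub>R k"])
        (use True \<open>v \<noteq> 0\<close> k in \<open>auto simp: inner_add_left inner_add_right inner_commute[of k v]\<close>)
  next
    case False
    show ?thesis
      by (rule that[of "inverse (v \<bullet> v) *\<^sub>R v"]) (use False \<open>v \<noteq> 0\<close> in auto)
  qed
  show ?thesis
  proof (rule that[OF nv])
    fix w assume w: "D w = 0" "n \<bullet> w = 0"
    show "w = 0"
    proof (rule ccontr)
      assume "w \<noteq> 0"
      have "k \<notin> span {w}"
        using nk w(2) by (auto simp: span_singleton)
      then have "independent {k, w}" using \<open>w \<noteq> 0\<close> by (simp add: independent_insert)
      moreover have "k \<noteq> w" using nk w(2) by auto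
      ultimately have "dim {k, w} = 2" by (simp add: dim_eq_card_independent)
      then show False using dim_range_add_dim_le[OF lin, of "{k, w}"] k w rank by auto
    qed
  qed
qed

lemma inj_slope_derivative:
  fixes D :: "'a::real_inner \<Rightarrow> 'a"
  assumes lin: "linear D" and vv: "v \<bullet> v = 1" and nv: "n \<bullet> v = 1"
    and orth: "\<And>w. v \<bullet> D w = 0" and ker: "\<And>w. D w = 0 \<Longrightarrow> n \<bullet> w = 0 \<Longrightarrow> w = 0"
  shows "inj (\<lambda>w. D w - (D w \<bullet> n) *\<^sub>R v + (w \<bullet> n) *\<^sub>R n)" (is "inj ?L")
proof -
  have "linear ?L"
    by (rule linearI)
      (simp_all add: linear_add[OF lin] linear_scale[OF lin] inner_add_left scaleR_add_left
        scaleR_diff_right scaleR_add_right)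
  moreover have "w = 0" if Lw: "?L w = 0" for w
  proof -
    have "n \<bullet> ?L w = (w \<bullet> n) * (n \<bullet> n)"
      using nv by (simp add: inner_diff_right inner_add_right inner_commute)
    moreover have "n \<noteq> 0" using nv by auto
    ultimately have wn: "w \<bullet> n = 0" using Lw by simp
    have "v \<bullet> ?L w = - (D w \<bullet> n)"
      using orth vv by (simp add: inner_diff_right inner_add_right wn)
    then have "D w = 0" using Lw wn by simp
    then show "w = 0" using ker wn by (simp add: inner_commute)
  qed
  ultimately show ?thesis using linear_injective_0 by blast
qed

lemma brouwer_zero_cball:
  fixes F :: "'a::euclidean_space \<Rightarrow> 'a"
  assumes "r \<ge> 0" and "continuous_on (cball p r) F"
    and "\<And>x. x \<in> cball p r \<Longrightarrow> x - F x \<in> cball p r"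
  obtains x where "x \<in> cball p r" and "F x = 0"
proof -
  have "cball p r \<noteq> {}" using assms(1) by simp
  moreover have "continuous_on (cball p r) (\<lambda>x. x - F x)"
    by (intro continuous_intros assms(2))
  moreover have "(\<lambda>x. x - F x) \<in> cball p r \<rightarrow> cball p r" using assms(3) by blast
  ultimately obtain x where "x \<in> cball p r" and "x - F x = x"
    using brouwer[OF compact_cball convex_cball] by blast
  then show ?thesis using that by simp
qed

lemma scaled_displacement_solution:
  fixes Psi :: "'a::euclidean_space \<Rightarrow> 'a"
  assumes deriv: "(Psi has_derivative L) (at p)" and "inj L" and "Psi p = 0"
    and cont: "continuous_on (cball p d) Psi" and "d > 0" and "e > 0"
  obtains lam x where "0 < lam" "lam < e" "x \<in> cball p d" "Psi x = lam *\<^sub>R (x - y)"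
proof -
  have linL: "linear L" using has_derivative_linear[OF deriv] .
  obtain g where ling: "linear g" and gL: "g \<circ> L = id"
    using linear_injective_left_inverse[OF linL \<open>inj L\<close>] by blast
  have "((g \<circ> Psi) has_derivative (g \<circ> L)) (at p)"
    using deriv ling by (intro diff_chain_at) (simp_all add: linear_imp_has_derivative)
  then obtain d1 where "d1 > 0" and d1:
    "\<And>x. norm (x - p) < d1 \<Longrightarrow> norm (g (Psi x) - (x - p)) \<le> 1/2 * norm (x - p)"
    using \<open>Psi p = 0\<close> linear_0[OF ling] gL
    unfolding has_derivative_at_alt by (auto dest!: spec[of _ "1/2"])
  obtain B where B: "B > 0" "\<And>z. norm (g z) \<le> B * norm z"
    using linear_bounded_pos[OF ling] by blast
  define r where "r = min d d1 / 2"
  have r: "0 < r" "r \<le> d" "r < d1" using \<open>d > 0\<close> \<open>d1 > 0\<close> by (auto simp: r_def)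
  define C where "C = B * (r + norm (p - y))"
  have "C > 0" using B(1) r(1) by (simp add: C_def add_pos_nonneg)
  define lam where "lam = min (e / 2) (r / (2 * C))"
  have lam: "0 < lam" "lam < e" "lam * C \<le> r / 2"
    using \<open>e > 0\<close> r(1) \<open>C > 0\<close> by (auto simp: lam_def min_def field_simps)
  (* Zeros of F are the solutions.  As g \<circ> Psi is the identity to first order at p, the map
     x \<mapsto> x - F x sends cball p r into itself once lam is small enough. *)
  define F where "F x = g (Psi x - lam *\<^sub>R (x - y))" for x
  have "x - F x \<in> cball p r" if "x \<in> cball p r" for x
  proof -
    have xp: "norm (x - p) \<le> r" using that by (simp add: dist_norm norm_minus_commute)
    have "norm (g (Psi x) - (x - p)) \<le> r / 2" using d1[of x] xp r(3) by simp
    moreover have "norm (lam *\<^sub>R g (x - y)) \<le> r / 2"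
    proof -
      have "norm (x - y) \<le> r + norm (p - y)"
        using norm_triangle_ineq[of "x - p" "p - y"] xp by simp
      then have "norm (g (x - y)) \<le> C"
        unfolding C_def using B by (meson mult_left_mono order_trans less_imp_le)
      then have "norm (lam *\<^sub>R g (x - y)) \<le> lam * C" using lam(1) by simp
      then show ?thesis using lam(3) by linarith
    qed
    moreover have "dist p (x - F x) = norm ((g (Psi x) - (x - p)) - lam *\<^sub>R g (x - y))"
      by (simp add: dist_norm F_def linear_diff[OF ling] linear_add[OF ling] linear_scale[OF ling] algebra_simps)
    ultimately show ?thesis
      using norm_triangle_ineq4[of "g (Psi x) - (x - p)" "lam *\<^sub>R g (x - y)"]
      unfolding mem_cball by linarith
  qed
  moreover have "continuous_on (cball p r) F"
  proof -
    have contPsi: "continuous_on (cball p r) Psi"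
      using cont by (rule continuous_on_subset) (use r(2) in auto)
    have contg: "continuous_on UNIV g"
      using ling by (simp add: linear_continuous_on linear_conv_bounded_linear)
    show ?thesis
      unfolding F_def by (intro continuous_intros contPsi continuous_on_compose2[OF contg]) auto
  qed
  ultimately obtain x where x: "x \<in> cball p r" and "F x = 0"
    using brouwer_zero_cball r(1) by (metis less_imp_le)
  moreover have "L (g z) = z" for z
    using linear_inverse_left[OF ling linL] gL by (simp add: fun_eq_iff)
  ultimately have "Psi x = lam *\<^sub>R (x - y)"
    using linear_0[OF linL] by (metis F_def eq_iff_diff_eq_0)
  moreover have "x \<in> cball p d" using x r(2) by auto
  ultimately show ?thesis using that lam by blast
qed

lemma self_mem_fib_line: "p \<in> fib_line V p"
  unfolding fib_line_def by (rule range_eqI[of _ _ 0]) simp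

lemma line_fibration_nonzero: "line_fibration V \<Longrightarrow> V x \<noteq> 0"
  by (metis line_fibration_def norm_zero zero_neq_one)

lemma line_fibration_derivative:
  assumes "line_fibration V"
  shows "(V has_derivative frechet_derivative V (at p)) (at p)"
  using assms frechet_derivative_works smooth_map_differentiable by (auto simp: line_fibration_def)

lemma line_fibration_continuous:
  assumes "line_fibration V"
  shows "continuous_on UNIV V"
  using assms smooth_map_differentiable
  by (intro continuous_at_imp_continuous_on ballI differentiable_imp_continuous_within)
    (auto simp: line_fibration_def)

lemma continuous_inner_gt_cball:
  fixes V :: "'a::metric_space \<Rightarrow> 'b::real_inner"
  assumes "continuous_on UNIV V" and "c < V p \<bullet> n"
  obtains d where "d > 0" and "\<And>x. x \<in> cball p d \<Longrightarrow> c < V x \<bullet> n"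
proof -
  have "open {x. c < V x \<bullet> n}"
    using assms(1) by (intro open_Collect_less continuous_intros) (auto simp: continuous_on_eq_continuous_at)
  moreover have "p \<in> {x. c < V x \<bullet> n}" using assms(2) by simp
  ultimately obtain d where "d > 0" and "cball p d \<subseteq> {x. c < V x \<bullet> n}"
    using open_contains_cball by blast
  then show ?thesis using that by blast
qed

lemma line_fibration_slope_chord:
  assumes fib: "line_fibration V" and xy: "(x - y) \<bullet> n = 0"
    and "V x \<bullet> n \<noteq> 0" and "V y \<bullet> n \<noteq> 0" and "lam \<noteq> 0"
    and slope: "inverse (V x \<bullet> n) *\<^sub>R V x - inverse (V y \<bullet> n) *\<^sub>R V y = lam *\<^sub>R (x - y)"
  shows "x = y"
proof -
  define z where "z = x - (inverse lam * inverse (V x \<bullet> n)) *\<^sub>R V x"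
  have zy: "z = y - (inverse lam * inverse (V y \<bullet> n)) *\<^sub>R V y"
  proof -
    have "inverse lam *\<^sub>R (inverse (V x \<bullet> n) *\<^sub>R V x - inverse (V y \<bullet> n) *\<^sub>R V y) = x - y"
      using slope \<open>lam \<noteq> 0\<close> by simp
    then show ?thesis by (simp add: z_def algebra_simps)
  qed
  have "z \<in> fib_line V x"
    unfolding fib_line_def z_def by (rule range_eqI[of _ _ "- (inverse lam * inverse (V x \<bullet> n))"]) simp
  moreover have "z \<in> fib_line V y"
    unfolding fib_line_def zy by (rule range_eqI[of _ _ "- (inverse lam * inverse (V y \<bullet> n))"]) simp
  ultimately have "fib_line V y = fib_line V x"
    using fib unfolding line_fibration_def by metis
  then obtain s where s: "y = x + s *\<^sub>R V x"
    using self_mem_fib_line[of y V] by (auto simp: fib_line_def)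
  then have "s * (V x \<bullet> n) = 0" using xy by (simp add: inner_diff_left)
  then show "x = y" using s \<open>V x \<bullet> n \<noteq> 0\<close> by simp
qed

lemma transversal_slope_map_hits_direction:
  assumes fib: "line_fibration V" and deriv: "(V has_derivative D) (at p)"
    and nv: "n \<bullet> V p = 1" and ker: "\<And>w. D w = 0 \<Longrightarrow> n \<bullet> w = 0 \<Longrightarrow> w = 0"
    and yn: "(y - p) \<bullet> n = 0" and "e > 0"
  obtains lam x where "lam > 0" and "x \<in> cball p e" and "(x - p) \<bullet> n = 0" and "V x \<bullet> n \<noteq> 0"
    and "inverse (V x \<bullet> n) *\<^sub>R V x - V p = lam *\<^sub>R (x - y)"
proof -
  have unit: "\<And>x. norm (V x) = 1" using fib by (simp add: line_fibration_def)
  have vn: "V p \<bullet> n = 1" using nv by (simp add: inner_commute)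
  define u where "u x = inverse (V x \<bullet> n) *\<^sub>R V x" for x
  (* The normal coordinate term makes the derivative invertible; a solution of
     Psi x = lam (x - y) with lam < n \<bullet> n still lies in the plane (x - p) \<bullet> n = 0. *)
  define Psi where "Psi x = u x - V p + ((x - p) \<bullet> n) *\<^sub>R n" for x
  define L where "L w = D w - (D w \<bullet> n) *\<^sub>R V p + (w \<bullet> n) *\<^sub>R n" for w
  have dPsi: "(Psi has_derivative L) (at p)"
    unfolding Psi_def u_def L_def
    by (rule derivative_eq_intros refl deriv | simp add: vn)+
  have injL: "inj L"
    unfolding L_def
    using has_derivative_linear[OF deriv] _ nv unit_field_derivative_orthogonal[OF unit deriv] ker
    by (rule inj_slope_derivative) (use unit in \<open>simp add: dot_square_norm\<close>)
  have Psi0: "Psi p = 0" by (simp add: Psi_def u_def vn)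
  have "1/2 < V p \<bullet> n" using vn by simp
  then obtain d0 where "d0 > 0" and d0: "\<And>x. x \<in> cball p d0 \<Longrightarrow> 1/2 < V x \<bullet> n"
    using continuous_inner_gt_cball[OF line_fibration_continuous[OF fib]] by blast
  define d where "d = min d0 e"
  have "d > 0" using \<open>d0 > 0\<close> \<open>e > 0\<close> by (simp add: d_def)
  have Vn: "1/2 < V x \<bullet> n" if "x \<in> cball p d" for x
    using that d0 by (auto simp: d_def)
  have contPsi: "continuous_on (cball p d) Psi"
  proof -
    have "continuous_on (cball p d) V"
      using line_fibration_continuous[OF fib] by (rule continuous_on_subset) simp
    then show ?thesis
      unfolding Psi_def u_def using Vn by (intro continuous_intros) force+
  qed
  have "(1/2::real) > 0" by simp
  then obtain lam x where lam: "0 < lam" "lam < 1/2" and x: "x \<in> cball p d"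
    and Psix: "Psi x = lam *\<^sub>R (x - y)"
    using scaled_displacement_solution[OF dPsi injL Psi0 contPsi \<open>d > 0\<close>] by blast
  have "1 \<le> n \<bullet> n"
    using Cauchy_Schwarz_ineq2[of n "V p"] nv unit by (simp add: dot_square_norm one_le_power)
  moreover have "((x - p) \<bullet> n) * (n \<bullet> n) = lam * ((x - p) \<bullet> n)"
  proof -
    have "Psi x \<bullet> n = ((x - p) \<bullet> n) * (n \<bullet> n)"
      using Vn[OF x] vn by (simp add: Psi_def u_def inner_diff_left inner_add_left)
    moreover have "(lam *\<^sub>R (x - y)) \<bullet> n = lam * ((x - p) \<bullet> n)"
      using yn by (simp add: inner_diff_left)
    ultimately show ?thesis using Psix by simp
  qed
  ultimately have xn: "(x - p) \<bullet> n = 0" using lam by (cases "(x - p) \<bullet> n = 0") auto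
  show ?thesis
  proof (rule that[OF lam(1) _ xn])
    show "x \<in> cball p e" using x by (auto simp: d_def)
    show "V x \<bullet> n \<noteq> 0" using Vn[OF x] by simp
    show "inverse (V x \<bullet> n) *\<^sub>R V x - V p = lam *\<^sub>R (x - y)"
      using Psix by (simp add: Psi_def u_def xn)
  qed
qed

lemma transversal_plane_no_parallel_direction:
  assumes fib: "line_fibration V" and deriv: "(V has_derivative D) (at p)"
    and nv: "n \<bullet> V p = 1" and ker: "\<And>w. D w = 0 \<Longrightarrow> n \<bullet> w = 0 \<Longrightarrow> w = 0"
    and yn: "(y - p) \<bullet> n = 0" and ym: "V y = m *\<^sub>R V p"
  shows "y = p"
proof (rule ccontr)
  assume "y \<noteq> p"
  then have "norm (y - p) / 2 > 0" by simp
  then obtain lam x where "lam > 0" and x: "x \<in> cball p (norm (y - p) / 2)"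
    and "(x - p) \<bullet> n = 0" and "V x \<bullet> n \<noteq> 0"
    and slope: "inverse (V x \<bullet> n) *\<^sub>R V x - V p = lam *\<^sub>R (x - y)"
    using transversal_slope_map_hits_direction[OF fib deriv nv ker yn] by metis
  have "m \<noteq> 0" using line_fibration_nonzero[OF fib, of y] ym by auto
  then have "V y \<bullet> n \<noteq> 0" and "inverse (V y \<bullet> n) *\<^sub>R V y = V p"
    using nv ym by (simp_all add: inner_commute)
  moreover have "(x - y) \<bullet> n = 0"
    using \<open>(x - p) \<bullet> n = 0\<close> yn by (simp add: inner_diff_left)
  ultimately have "x = y"
    using line_fibration_slope_chord[OF fib, of x y n lam] \<open>lam > 0\<close> \<open>V x \<bullet> n \<noteq> 0\<close> slope
    by simp
  then show False using x \<open>y \<noteq> p\<close> by (simp add: dist_norm norm_minus_commute)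
qed

lemma parallel_fib_line_meets_plane:
  assumes fib: "line_fibration V" and "fib_line V q \<noteq> fib_line V p"
    and qc: "V q = c *\<^sub>R V p" and nv: "n \<bullet> V p = 1"
  obtains y m where "(y - p) \<bullet> n = 0" and "y \<noteq> p" and "V y = m *\<^sub>R V p"
proof -
  have "c \<noteq> 0" using line_fibration_nonzero[OF fib, of q] qc by auto
  define y where "y = q + (((p - q) \<bullet> n) / c) *\<^sub>R V q"
  have "(y - p) \<bullet> n = 0"
    using \<open>c \<noteq> 0\<close> nv by (simp add: y_def qc inner_commute[of _ n] inner_diff_right inner_add_right)
  have "y \<in> fib_line V q" unfolding fib_line_def y_def by (rule rangeI)
  then have fy: "fib_line V y = fib_line V q" using fib by (simp add: line_fibration_def)
  then have "y \<noteq> p" using \<open>fib_line V q \<noteq> fib_line V p\<close> by auto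
  have "y + V y \<in> fib_line V y" unfolding fib_line_def by (rule range_eqI[of _ _ 1]) simp
  then obtain a where "y + V y = q + a *\<^sub>R V q" using fy by (auto simp: fib_line_def)
  then have "V y = ((a - ((p - q) \<bullet> n) / c) * c) *\<^sub>R V p"
    by (simp add: y_def qc algebra_simps)
  with \<open>(y - p) \<bullet> n = 0\<close> \<open>y \<noteq> p\<close> show ?thesis by (rule that)
qed

lemma line_fibration_derivative_rank_le_2:
  assumes "line_fibration V"
  shows "dim (range (frechet_derivative V (at p))) \<le> 2"
proof -
  have unit: "\<And>x. norm (V x) = 1" using assms by (simp add: line_fibration_def)
  have "range (frechet_derivative V (at p)) \<subseteq> {y. V p \<bullet> y = 0}"
    using unit_field_derivative_orthogonal[OF unit line_fibration_derivative[OF assms]] by auto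
  then have "dim (range (frechet_derivative V (at p))) \<le> dim {y. V p \<bullet> y = 0}"
    by (rule dim_subset)
  also have "\<dots> = 2"
    using dim_hyperplane[OF line_fibration_nonzero[OF assms]] by simp
  finally show ?thesis .
qed

lemma contact_field_derivative_rank_ne_0:
  assumes "contact_field V"
  shows "dim (range (frechet_derivative V (at p))) \<noteq> 0"
proof
  assume "dim (range (frechet_derivative V (at p))) = 0"
  then have "frechet_derivative V (at p) w = 0" for w
    by (auto simp: dim_eq_0)
  then have "curl V p = 0"
    by (simp add: curl_def pd_def vec_eq_iff forall_3 vector_3)
  then show False using assms by (metis contact_field_def inner_zero_right)
qed

lemma line_fibration_parallel_rank_ne_2:
  assumes fib: "line_fibration V" and "fib_line V q \<noteq> fib_line V p" and "V q = c *\<^sub>R V p"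
  shows "dim (range (frechet_derivative V (at p))) \<noteq> 2"
proof
  define D where "D = frechet_derivative V (at p)"
  assume "dim (range (frechet_derivative V (at p))) = 2"
  then have rank: "dim (range D) + 1 = DIM(real^3)" by (simp add: D_def)
  have deriv: "(V has_derivative D) (at p)" unfolding D_def by (rule line_fibration_derivative[OF fib])
  obtain n where nv: "n \<bullet> V p = 1" and ker: "\<And>w. D w = 0 \<Longrightarrow> n \<bullet> w = 0 \<Longrightarrow> w = 0"
    using exists_transversal_to_kernel[OF has_derivative_linear[OF deriv] rank
        line_fibration_nonzero[OF fib]] by blast
  obtain y m where "(y - p) \<bullet> n = 0" and "y \<noteq> p" and "V y = m *\<^sub>R V p"
    using parallel_fib_line_meets_plane[OF assms nv] by blast
  then show False
    using transversal_plane_no_parallel_direction[OF fib deriv nv ker] by blast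
qed

theorem mainTheorem3:
  fixes V :: "real^3 \<Rightarrow> real^3"
  assumes "line_fibration V"
    and "contact_field V"
    and "\<forall>p. \<exists>q. fib_line V q \<noteq> fib_line V p \<and> (\<exists>c::real. V q = c *\<^sub>R V p)"
  shows "\<forall>p. dim (range (frechet_derivative V (at p))) = 1"
proof
  fix p
  obtain q c where "fib_line V q \<noteq> fib_line V p" and "V q = c *\<^sub>R V p"
    using assms(3) by blast
  then show "dim (range (frechet_derivative V (at p))) = 1"
    using line_fibration_derivative_rank_le_2[OF assms(1)]
      contact_field_derivative_rank_ne_0[OF assms(2)]
      line_fibration_parallel_rank_ne_2[OF assms(1)]
    by (metis One_nat_def Suc_1 le_Suc_eq le_zero_eq)
qed

end
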